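(* Let $X$ be an irreducible continuous-time Markov jump process on a finite state space $K$ with transition rates $k(x,y;\beta)\geq 0$ ($x\neq y$) depending on a real parameter $\beta$, such that $k(x,y;\beta)>0$ iff $k(y,x;\beta)>0$, that this set of pairs does not depend on $\beta>0$, and that for every such pair the limit $\phi(x,y)=\lim_{\beta\to\infty}\frac1\beta\log k(x,y;\beta)$ exists (finite). Let $\mathcal{A}$ be the union of all attractors of $K$. Then for every $y\in K$ there exists $x\in\mathcal{A}$ with $\mathcal{U}(y,x)=0$.
   Context: Make $K$ into a graph with an edge $x\sim y$ iff $x\neq y$ and $k(x,y;\beta)>0$. Define $\Gamma(x)=-\max_{y\sim x}\phi(x,y)$ and, for $x\sim y$, $U(x,y)=-\phi(x,y)-\Gamma(x)\geq 0$; set $U(x,x)=+\infty$. A state $y$ with $U(x,y)=0$ is a preferred successor of $x$. A path $D=(x_0,x_1,\dots,x_n)$ is a sequence with $x_{m}\sim x_{m+1}$, and $U(D)=\sum_{m=0}^{n-1}U(x_m,x_{m+1})$. For $x,y\in K$, $\mathcal{U}(x,y)=\min_D U(D)$ over all paths $D$ from $x$ to $y$. A non-empty set $A\subset K$ is an attractor if $\mathcal{U}(x,y)=0$ for all $x\neq y\in A$ and $\mathcal{U}(x,y)>0$ for all $x\in A$, $y\in K\setminus A$. *)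

theory Defs
  imports Complex_Main
begin

definition edge :: "'a set \<Rightarrow> ('a \<Rightarrow> 'a \<Rightarrow> real \<Rightarrow> real) \<Rightarrow> 'a \<Rightarrow> 'a \<Rightarrow> bool" where
  "edge K k x y \<longleftrightarrow> x \<in> K \<and> y \<in> K \<and> x \<noteq> y \<and> (\<forall>\<beta>>0. k x y \<beta> > 0)"

definition Gamma :: "'a set \<Rightarrow> ('a \<Rightarrow> 'a \<Rightarrow> real \<Rightarrow> real) \<Rightarrow> ('a \<Rightarrow> 'a \<Rightarrow> real) \<Rightarrow> 'a \<Rightarrow> real" where
  "Gamma K k \<phi> x = - Max {\<phi> x y | y. edge K k x y}"

definition Ucost :: "'a set \<Rightarrow> ('a \<Rightarrow> 'a \<Rightarrow> real \<Rightarrow> real) \<Rightarrow> ('a \<Rightarrow> 'a \<Rightarrow> real) \<Rightarrow> 'a \<Rightarrow> 'a \<Rightarrow> real" where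
  "Ucost K k \<phi> x y = - \<phi> x y - Gamma K k \<phi> x"

definition is_path :: "'a set \<Rightarrow> ('a \<Rightarrow> 'a \<Rightarrow> real \<Rightarrow> real) \<Rightarrow> 'a list \<Rightarrow> 'a \<Rightarrow> 'a \<Rightarrow> bool" where
  "is_path K k D x y \<longleftrightarrow> D \<noteq> [] \<and> hd D = x \<and> last D = y \<and>
     (\<forall>m < length D - 1. edge K k (D ! m) (D ! Suc m))"

definition path_cost :: "'a set \<Rightarrow> ('a \<Rightarrow> 'a \<Rightarrow> real \<Rightarrow> real) \<Rightarrow> ('a \<Rightarrow> 'a \<Rightarrow> real) \<Rightarrow> 'a list \<Rightarrow> real" where
  "path_cost K k \<phi> D = (\<Sum>m < length D - 1. Ucost K k \<phi> (D ! m) (D ! Suc m))"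

definition calU :: "'a set \<Rightarrow> ('a \<Rightarrow> 'a \<Rightarrow> real \<Rightarrow> real) \<Rightarrow> ('a \<Rightarrow> 'a \<Rightarrow> real) \<Rightarrow> 'a \<Rightarrow> 'a \<Rightarrow> real" where
  "calU K k \<phi> x y = Inf {path_cost K k \<phi> D | D. is_path K k D x y}"

definition attractor :: "'a set \<Rightarrow> ('a \<Rightarrow> 'a \<Rightarrow> real \<Rightarrow> real) \<Rightarrow> ('a \<Rightarrow> 'a \<Rightarrow> real) \<Rightarrow> 'a set \<Rightarrow> bool" where
  "attractor K k \<phi> A \<longleftrightarrow> A \<noteq> {} \<and> A \<subseteq> K \<and>
     (\<forall>x\<in>A. \<forall>y\<in>A. x \<noteq> y \<longrightarrow> calU K k \<phi> x y = 0) \<and>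
     (\<forall>x\<in>A. \<forall>y\<in>K - A. calU K k \<phi> x y > 0)"

definition irreducible_at :: "'a set \<Rightarrow> ('a \<Rightarrow> 'a \<Rightarrow> real \<Rightarrow> real) \<Rightarrow> real \<Rightarrow> bool" where
  "irreducible_at K k \<beta> \<longleftrightarrow>
     (\<forall>x\<in>K. \<forall>y\<in>K. (x, y) \<in> {(a, b). a \<in> K \<and> b \<in> K \<and> a \<noteq> b \<and> k a b \<beta> > 0}\<^sup>*)"

end

theory Submission
  imports Defs
begin

text \<open>
  Only the graph of preferred steps (edges of cost zero) matters. Every path leaving the
  set of states reachable by preferred steps uses an edge of positive cost, and there are
  finitely many edges, so its cost is bounded below by the least positive edge cost; inside
  that set costs vanish. Hence a terminal class of the preferred-step graph, i.e. a class from
  which every preferred step leads back, is an attractor. Starting from any state and moving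
  along preferred steps to a state whose reachable set has minimal size lands in such a class.
  The argument is purely combinatorial: of the hypotheses on the rates, only irreducibility and
  the \<open>\<beta>\<close>-independence of the edge set are needed, to connect any two states by a path.
\<close>

lemma rtrancl_imp_chain:
  assumes "(u, v) \<in> Q\<^sup>*"
  shows "\<exists>D. D \<noteq> [] \<and> hd D = u \<and> last D = v \<and> (\<forall>m < length D - 1. (D ! m, D ! Suc m) \<in> Q)"
  using assms
proof (induction rule: rtrancl_induct)
  case base
  show ?case by (intro exI[of _ "[u]"]) auto
next
  case (step v w)
  then obtain D where D: "D \<noteq> []" "hd D = u" "last D = v"
    and chain: "\<forall>m < length D - 1. (D ! m, D ! Suc m) \<in> Q" by blast
  have "((D @ [w]) ! m, (D @ [w]) ! Suc m) \<in> Q" if "m < length D" for m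
  proof (cases "m < length D - 1")
    case True
    then show ?thesis using chain by (auto simp: nth_append)
  next
    case False
    then have "m = length D - 1" using that by auto
    then show ?thesis using D step.hyps(2) by (auto simp: nth_append last_conv_nth)
  qed
  then show ?case using D by (intro exI[of _ "D @ [w]"]) auto
qed

lemma chain_imp_rtrancl:
  "D \<noteq> [] \<Longrightarrow> \<forall>m < length D - 1. (D ! m, D ! Suc m) \<in> Q \<Longrightarrow> (hd D, last D) \<in> Q\<^sup>*"
proof (induction D)
  case Nil
  then show ?case by simp
next
  case (Cons x xs)
  show ?case
  proof (cases "xs = []")
    case True
    then show ?thesis by simp
  next
    case False
    have "\<forall>m < length xs - 1. (xs ! m, xs ! Suc m) \<in> Q"
    proof (intro allI impI)
      fix m assume "m < length xs - 1"
      then show "(xs ! m, xs ! Suc m) \<in> Q" using Cons.prems(2)[rule_format, of "Suc m"] by simp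
    qed
    then have "(hd xs, last xs) \<in> Q\<^sup>*" using Cons.IH False by blast
    moreover have "(x, hd xs) \<in> Q"
      using Cons.prems(2)[rule_format, of 0] False by (simp add: hd_conv_nth)
    ultimately show ?thesis using False by (simp add: converse_rtrancl_into_rtrancl)
  qed
qed

lemma rtrancl_terminal_exists:
  assumes "finite (Q\<^sup>* `` {y})"
  shows "\<exists>x. (y, x) \<in> Q\<^sup>* \<and> (\<forall>w. (x, w) \<in> Q\<^sup>* \<longrightarrow> (w, x) \<in> Q\<^sup>*)"
proof -
  obtain x where yx: "(y, x) \<in> Q\<^sup>*"
    and least: "\<And>z. (y, z) \<in> Q\<^sup>* \<Longrightarrow> card (Q\<^sup>* `` {x}) \<le> card (Q\<^sup>* `` {z})"
    using ex_has_least_nat[of "\<lambda>z. (y, z) \<in> Q\<^sup>*" y "\<lambda>z. card (Q\<^sup>* `` {z})"] by blast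
  have fin_x: "finite (Q\<^sup>* `` {x})"
    by (rule rev_finite_subset[OF assms]) (use yx in \<open>auto intro: rtrancl_trans\<close>)
  have "(w, x) \<in> Q\<^sup>*" if xw: "(x, w) \<in> Q\<^sup>*" for w
  proof -
    have sub: "Q\<^sup>* `` {w} \<subseteq> Q\<^sup>* `` {x}" using xw by (auto intro: rtrancl_trans)
    have "card (Q\<^sup>* `` {x}) \<le> card (Q\<^sup>* `` {w})" using least rtrancl_trans[OF yx xw] .
    then have "Q\<^sup>* `` {w} = Q\<^sup>* `` {x}" using card_seteq[OF fin_x sub] by simp
    then show ?thesis by blast
  qed
  then show ?thesis using yx by blast
qed

definition preferred_steps ::
    "'a set \<Rightarrow> ('a \<Rightarrow> 'a \<Rightarrow> real \<Rightarrow> real) \<Rightarrow> ('a \<Rightarrow> 'a \<Rightarrow> real) \<Rightarrow> ('a \<times> 'a) set" where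
  "preferred_steps K k \<phi> = {(x, y). edge K k x y \<and> Ucost K k \<phi> x y = 0}"

lemma preferred_steps_reach_in:
  assumes "(x, y) \<in> (preferred_steps K k \<phi>)\<^sup>*" and "x \<in> K"
  shows "y \<in> K"
  using assms by (induction rule: rtrancl_induct) (auto simp: preferred_steps_def edge_def)

lemma Ucost_nonneg:
  assumes "finite K" and "edge K k x y"
  shows "0 \<le> Ucost K k \<phi> x y"
proof -
  have "finite {\<phi> x z | z. edge K k x z}"
    by (rule finite_subset[of _ "\<phi> x ` K"]) (auto simp: edge_def assms(1))
  then have "\<phi> x y \<le> Max {\<phi> x z | z. edge K k x z}" using assms(2) by (intro Max_ge) auto
  then show ?thesis by (simp add: Ucost_def Gamma_def)
qed

lemma Ucost_le_path_cost:
  assumes "finite K" and "is_path K k D u v" and "m < length D - 1"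
  shows "Ucost K k \<phi> (D ! m) (D ! Suc m) \<le> path_cost K k \<phi> D"
  unfolding path_cost_def
  using assms by (intro member_le_sum[where f = "\<lambda>m. Ucost K k \<phi> (D ! m) (D ! Suc m)"])
    (auto simp: is_path_def intro: Ucost_nonneg)

lemma path_cost_nonneg: "finite K \<Longrightarrow> is_path K k D u v \<Longrightarrow> 0 \<le> path_cost K k \<phi> D"
  unfolding path_cost_def is_path_def by (auto intro!: sum_nonneg Ucost_nonneg)

lemma calU_eq_0_if_preferred:
  assumes "finite K" and "(u, v) \<in> (preferred_steps K k \<phi>)\<^sup>*"
  shows "calU K k \<phi> u v = 0"
proof -
  obtain D where D: "D \<noteq> []" "hd D = u" "last D = v"
    and chain: "\<forall>m < length D - 1. (D ! m, D ! Suc m) \<in> preferred_steps K k \<phi>"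
    using rtrancl_imp_chain[OF assms(2)] by blast
  have path: "is_path K k D u v" using D chain by (auto simp: is_path_def preferred_steps_def)
  have "path_cost K k \<phi> D = 0"
    unfolding path_cost_def using chain by (intro sum.neutral) (auto simp: preferred_steps_def)
  then have "0 \<in> {path_cost K k \<phi> D | D. is_path K k D u v}" using path by force
  then show ?thesis
    unfolding calU_def using path_cost_nonneg[OF assms(1)] by (intro cInf_eq_minimum) auto
qed

lemma path_leaving_preferred_has_costly_step:
  assumes "finite K" and path: "is_path K k D u v"
    and leaves: "(u, v) \<notin> (preferred_steps K k \<phi>)\<^sup>*"
  obtains x y where "edge K k x y" and "0 < Ucost K k \<phi> x y"
    and "Ucost K k \<phi> x y \<le> path_cost K k \<phi> D"
proof -
  have "\<not> (\<forall>m < length D - 1. (D ! m, D ! Suc m) \<in> preferred_steps K k \<phi>)"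
    using chain_imp_rtrancl[of D] path leaves by (auto simp: is_path_def)
  then obtain m where m: "m < length D - 1"
    and costly: "(D ! m, D ! Suc m) \<notin> preferred_steps K k \<phi>" by blast
  have e: "edge K k (D ! m) (D ! Suc m)" using path m by (auto simp: is_path_def)
  have "0 < Ucost K k \<phi> (D ! m) (D ! Suc m)"
    using Ucost_nonneg[OF assms(1) e, of \<phi>] costly e by (auto simp: preferred_steps_def)
  then show ?thesis using that e Ucost_le_path_cost[OF assms(1) path m] by blast
qed

lemma calU_pos_if_not_preferred:
  assumes finK: "finite K" and path: "is_path K k D\<^sub>0 u v"
    and leaves: "(u, v) \<notin> (preferred_steps K k \<phi>)\<^sup>*"
  shows "0 < calU K k \<phi> u v"
proof -
  define P where "P = {Ucost K k \<phi> x y | x y. edge K k x y \<and> 0 < Ucost K k \<phi> x y}"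
  have "P \<subseteq> (\<lambda>(x, y). Ucost K k \<phi> x y) ` (K \<times> K)"
    by (auto simp: P_def edge_def)
  then have finP: "finite P" using finK by (auto intro: finite_subset)
  have bound: "Min P \<le> path_cost K k \<phi> D" if D: "is_path K k D u v" for D
  proof -
    obtain x y where "edge K k x y" "0 < Ucost K k \<phi> x y" "Ucost K k \<phi> x y \<le> path_cost K k \<phi> D"
      using path_leaving_preferred_has_costly_step[OF finK D leaves] .
    moreover from calculation have "Min P \<le> Ucost K k \<phi> x y"
      using finP by (intro Min_le) (auto simp: P_def)
    ultimately show ?thesis by linarith
  qed
  obtain x y where "edge K k x y" "0 < Ucost K k \<phi> x y"
    using path_leaving_preferred_has_costly_step[OF finK path leaves] .
  then have "P \<noteq> {}" by (auto simp: P_def)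
  then have "0 < Min P" using finP by (auto simp: P_def)
  also have "Min P \<le> calU K k \<phi> u v"
    unfolding calU_def using path bound by (intro cInf_greatest) auto
  finally show ?thesis .
qed

lemma irreducible_imp_path:
  assumes indep: "\<And>x y \<beta> \<beta>'. x \<in> K \<Longrightarrow> y \<in> K \<Longrightarrow> x \<noteq> y \<Longrightarrow> \<beta> > 0 \<Longrightarrow> \<beta>' > 0 \<Longrightarrow>
                  k x y \<beta> > 0 \<longleftrightarrow> k x y \<beta>' > 0"
    and irred: "irreducible_at K k 1"
    and "u \<in> K" and "v \<in> K"
  shows "\<exists>D. is_path K k D u v"
proof -
  let ?E = "{(a, b). a \<in> K \<and> b \<in> K \<and> a \<noteq> b \<and> k a b 1 > 0}"
  have "?E \<subseteq> {(a, b). edge K k a b}"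
    using indep[of _ _ 1] by (auto simp: edge_def)
  moreover have "(u, v) \<in> ?E\<^sup>*"
    using irred assms(3,4) unfolding irreducible_at_def by blast
  ultimately have "(u, v) \<in> {(a, b). edge K k a b}\<^sup>*"
    using rtrancl_mono by blast
  from rtrancl_imp_chain[OF this] show ?thesis
    unfolding is_path_def by auto
qed

lemma attractor_terminal_class:
  assumes finK: "finite K" and "x \<in> K"
    and connected: "\<And>u v. u \<in> K \<Longrightarrow> v \<in> K \<Longrightarrow> \<exists>D. is_path K k D u v"
    and terminal: "\<And>w. (x, w) \<in> (preferred_steps K k \<phi>)\<^sup>* \<Longrightarrow> (w, x) \<in> (preferred_steps K k \<phi>)\<^sup>*"
  shows "attractor K k \<phi> ((preferred_steps K k \<phi>)\<^sup>* `` {x})"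
proof -
  let ?Z = "preferred_steps K k \<phi>"
  have sub: "?Z\<^sup>* `` {x} \<subseteq> K"
    using \<open>x \<in> K\<close> preferred_steps_reach_in by fastforce
  have "calU K k \<phi> u w = 0" if "u \<in> ?Z\<^sup>* `` {x}" "w \<in> ?Z\<^sup>* `` {x}" for u w
    using that terminal by (intro calU_eq_0_if_preferred[OF finK]) (blast intro: rtrancl_trans)
  moreover have "0 < calU K k \<phi> u w" if u: "u \<in> ?Z\<^sup>* `` {x}" and w: "w \<in> K - ?Z\<^sup>* `` {x}" for u w
  proof -
    have "(u, w) \<notin> ?Z\<^sup>*" using u w by (blast intro: rtrancl_trans)
    moreover obtain D where "is_path K k D u w" using connected u w sub by blast
    ultimately show ?thesis using calU_pos_if_not_preferred[OF finK] by blast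
  qed
  ultimately show ?thesis using sub by (auto simp: attractor_def)
qed

theorem proposition2:
  fixes K :: "'a set" and k :: "'a \<Rightarrow> 'a \<Rightarrow> real \<Rightarrow> real" and \<phi> :: "'a \<Rightarrow> 'a \<Rightarrow> real"
  assumes finK: "finite K"
    and nonneg: "\<And>x y \<beta>. x \<in> K \<Longrightarrow> y \<in> K \<Longrightarrow> x \<noteq> y \<Longrightarrow> k x y \<beta> \<ge> 0"
    and symm: "\<And>x y \<beta>. x \<in> K \<Longrightarrow> y \<in> K \<Longrightarrow> x \<noteq> y \<Longrightarrow> k x y \<beta> > 0 \<longleftrightarrow> k y x \<beta> > 0"
    and indep: "\<And>x y \<beta> \<beta>'. x \<in> K \<Longrightarrow> y \<in> K \<Longrightarrow> x \<noteq> y \<Longrightarrow> \<beta> > 0 \<Longrightarrow> \<beta>' > 0 \<Longrightarrow>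
                  k x y \<beta> > 0 \<longleftrightarrow> k x y \<beta>' > 0"
    and irred: "\<And>\<beta>. \<beta> > 0 \<Longrightarrow> irreducible_at K k \<beta>"
    and lim: "\<And>x y. edge K k x y \<Longrightarrow> ((\<lambda>\<beta>. ln (k x y \<beta>) / \<beta>) \<longlongrightarrow> \<phi> x y) at_top"
  shows "\<forall>y\<in>K. \<exists>x\<in>\<Union>{A. attractor K k \<phi> A}. calU K k \<phi> y x = 0"
proof
  fix y assume "y \<in> K"
  let ?Z = "preferred_steps K k \<phi>"
  have "?Z\<^sup>* `` {y} \<subseteq> K"
    using \<open>y \<in> K\<close> preferred_steps_reach_in by fastforce
  then obtain x where yx: "(y, x) \<in> ?Z\<^sup>*" and terminal: "\<forall>w. (x, w) \<in> ?Z\<^sup>* \<longrightarrow> (w, x) \<in> ?Z\<^sup>*"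
    using rtrancl_terminal_exists finite_subset[OF _ finK] by metis
  have "x \<in> K" using yx \<open>y \<in> K\<close> by (rule preferred_steps_reach_in)
  have "attractor K k \<phi> (?Z\<^sup>* `` {x})"
    using finK \<open>x \<in> K\<close> irreducible_imp_path[OF indep irred] terminal
    by (intro attractor_terminal_class) auto
  moreover have "x \<in> ?Z\<^sup>* `` {x}" by simp
  ultimately show "\<exists>x\<in>\<Union>{A. attractor K k \<phi> A}. calU K k \<phi> y x = 0"
    using calU_eq_0_if_preferred[OF finK yx] by blast
qed

end
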